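(* Let $\mathbb{H}$ be a Hilbert space with norm $\|\cdot\|$, $f\in\mathbb{H}$, and let $D$ be a finite or infinite dictionary of elements of $\mathbb{H}$. For $\lambda\ge0$ and $\delta>0$ define $$L_D(f,\lambda)=\inf_{h\in\mathcal{L}_1(D)}\big(\|f-h\|^2+\lambda\|h\|_{\mathcal{L}_1(D)}\big),\qquad K_D(f,\delta)=\inf_{h\in\mathcal{L}_1(D)}\big(\|f-h\|+\delta\|h\|_{\mathcal{L}_1(D)}\big).$$ Then for every $\lambda\ge0$, $$\frac12\inf_{\delta>0}\Big(K_D^2(f,\delta)+\frac{\lambda^2}{2\delta^2}\Big)\le L_D(f,\lambda)\le\inf_{\delta>0}\Big(K_D^2(f,\delta)+\frac{\lambda^2}{4\delta^2}\Big).$$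
   Context: $\mathcal{L}_1(D)$ denotes the set of $h\in\mathbb{H}$ which can be written $h=\sum_{\phi\in D}\theta_\phi\phi$ with $\sum_{\phi\in D}|\theta_\phi|<\infty$, equipped with $\|h\|_{\mathcal{L}_1(D)}=\inf\{\sum_{\phi\in D}|\theta_\phi|:h=\sum_{\phi\in D}\theta_\phi\phi\}$. *)

theory Defs
  imports "HOL-Analysis.Analysis"
begin

definition l1_reps :: "'a::real_normed_vector set \<Rightarrow> 'a \<Rightarrow> ('a \<Rightarrow> real) set" where
  "l1_reps D h = {\<theta>. ((\<lambda>\<phi>. \<bar>\<theta> \<phi>\<bar>) summable_on D) \<and> ((\<lambda>\<phi>. \<theta> \<phi> *\<^sub>R \<phi>) has_sum h) D}"

definition L1 :: "'a::real_normed_vector set \<Rightarrow> 'a set" where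
  "L1 D = {h. l1_reps D h \<noteq> {}}"

definition L1_norm :: "'a::real_normed_vector set \<Rightarrow> 'a \<Rightarrow> real" where
  "L1_norm D h = Inf ((\<lambda>\<theta>. \<Sum>\<^sub>\<infinity>\<phi>\<in>D. \<bar>\<theta> \<phi>\<bar>) ` l1_reps D h)"

definition L_D :: "'a::real_normed_vector set \<Rightarrow> 'a \<Rightarrow> real \<Rightarrow> real" where
  "L_D D f lam = (INF h\<in>L1 D. (norm (f - h))\<^sup>2 + lam * L1_norm D h)"

definition K_D :: "'a::real_normed_vector set \<Rightarrow> 'a \<Rightarrow> real \<Rightarrow> real" where
  "K_D D f \<delta> = (INF h\<in>L1 D. norm (f - h) + \<delta> * L1_norm D h)"

end

theory Submission
  imports Defs
begin

text \<open>Both bounds come from comparing, for a fixed \<open>h\<close> with \<open>a = \<parallel>f - h\<parallel>\<close> and \<open>N = \<parallel>h\<parallel>\<^sub>1\<close>,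
  the quantities \<open>a\<^sup>2 + \<lambda>N\<close> and \<open>(a + \<delta>N)\<^sup>2\<close>. By AM-GM, \<open>\<lambda>N \<le> \<delta>\<^sup>2N\<^sup>2 + \<lambda>\<^sup>2/(4\<delta>\<^sup>2)\<close>
  with equality for a suitable \<open>\<delta>\<close>, while \<open>a\<^sup>2 + \<delta>\<^sup>2N\<^sup>2\<close> lies between \<open>(a + \<delta>N)\<^sup>2/2\<close> and
  \<open>(a + \<delta>N)\<^sup>2\<close>.\<close>

lemma zero_in_L1: "0 \<in> L1 D"
proof -
  have "(\<lambda>_. 0) \<in> l1_reps D 0" unfolding l1_reps_def by simp
  then show ?thesis unfolding L1_def by blast
qed

lemma L1_norm_nonneg: "h \<in> L1 D \<Longrightarrow> 0 \<le> L1_norm D h"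
  unfolding L1_norm_def L1_def
  by (rule cInf_greatest) (auto intro: infsum_nonneg)

lemma K_D_nonneg: "\<delta> > 0 \<Longrightarrow> 0 \<le> K_D D f \<delta>"
  unfolding K_D_def using zero_in_L1[of D]
  by (intro cINF_greatest) (auto intro!: add_nonneg_nonneg mult_nonneg_nonneg L1_norm_nonneg)

lemma K_D_le:
  assumes "\<delta> > 0" "h \<in> L1 D"
  shows "K_D D f \<delta> \<le> norm (f - h) + \<delta> * L1_norm D h"
  unfolding K_D_def
proof (rule cINF_lower[OF _ assms(2)])
  show "bdd_below ((\<lambda>h. norm (f - h) + \<delta> * L1_norm D h) ` L1 D)"
    using assms(1) by (intro bdd_belowI[where m=0])
      (auto intro!: add_nonneg_nonneg mult_nonneg_nonneg L1_norm_nonneg)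
qed

lemma L_D_le:
  assumes "lam \<ge> 0" "h \<in> L1 D"
  shows "L_D D f lam \<le> (norm (f - h))\<^sup>2 + lam * L1_norm D h"
  unfolding L_D_def
proof (rule cINF_lower[OF _ assms(2)])
  show "bdd_below ((\<lambda>h. (norm (f - h))\<^sup>2 + lam * L1_norm D h) ` L1 D)"
    using assms(1) by (intro bdd_belowI[where m=0])
      (auto intro!: add_nonneg_nonneg mult_nonneg_nonneg L1_norm_nonneg)
qed

lemma mult_le_amgm_quarter:
  fixes lam N \<delta> :: real
  assumes "\<delta> \<noteq> 0"
  shows "lam * N \<le> \<delta>\<^sup>2 * N\<^sup>2 + lam\<^sup>2 / (4 * \<delta>\<^sup>2)"
proof -
  have "0 \<le> (\<delta> * N - lam / (2 * \<delta>))\<^sup>2" by simp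
  also have "\<dots> = \<delta>\<^sup>2 * N\<^sup>2 + lam\<^sup>2 / (4 * \<delta>\<^sup>2) - lam * N"
    using assms by (simp add: power2_eq_square field_simps)
  finally show ?thesis by simp
qed

lemma amgm_quarter_approx:
  fixes N lam e :: real
  assumes "N \<ge> 0" "lam \<ge> 0" "e > 0"
  shows "\<exists>\<delta>>0. \<delta>\<^sup>2 * N\<^sup>2 + lam\<^sup>2 / (4 * \<delta>\<^sup>2) \<le> lam * N + e"
proof (cases "lam = 0")
  case True
  define \<delta> where "\<delta> = sqrt e / (N + 1)"
  have "\<delta>\<^sup>2 * N\<^sup>2 = e * (N / (N + 1))\<^sup>2"
    using assms unfolding \<delta>_def by (simp add: power_divide field_simps)
  also have "\<dots> \<le> e"
    using assms mult_left_mono[of "(N / (N + 1))\<^sup>2" 1 e] by (simp add: power_le_one_iff)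
  finally show ?thesis
    using assms True by (intro exI[of _ \<delta>]) (simp add: \<delta>_def)
next
  case False
  then have lam: "lam > 0" using assms by simp
  show ?thesis
  proof (cases "N = 0")
    case True
    define \<delta> where "\<delta> = lam / (2 * sqrt e)"
    have "lam\<^sup>2 / (4 * \<delta>\<^sup>2) = e"
      using assms lam unfolding \<delta>_def by (simp add: power_divide power_mult_distrib field_simps)
    then show ?thesis
      using assms lam True by (intro exI[of _ \<delta>]) (simp add: \<delta>_def)
  next
    case False
    then have N: "N > 0" using assms by simp
    define \<delta> where "\<delta> = sqrt (lam / (2 * N))"
    have \<delta>2: "\<delta>\<^sup>2 = lam / (2 * N)" unfolding \<delta>_def using N lam by simp
    have "\<delta>\<^sup>2 * N\<^sup>2 + lam\<^sup>2 / (4 * \<delta>\<^sup>2) = lam * N"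
      unfolding \<delta>2 using N lam by (simp add: power2_eq_square field_simps)
    then show ?thesis
      using assms N lam by (intro exI[of _ \<delta>]) (simp add: \<delta>_def)
  qed
qed

lemma half_K_D_bound:
  assumes "\<delta> > 0" "h \<in> L1 D"
  shows "(1/2) * ((K_D D f \<delta>)\<^sup>2 + lam\<^sup>2 / (2 * \<delta>\<^sup>2))
           \<le> (norm (f - h))\<^sup>2 + (\<delta>\<^sup>2 * (L1_norm D h)\<^sup>2 + lam\<^sup>2 / (4 * \<delta>\<^sup>2))"
proof -
  define a where "a = norm (f - h)"
  define N where "N = L1_norm D h"
  have "(K_D D f \<delta>)\<^sup>2 \<le> (a + \<delta> * N)\<^sup>2"
    using K_D_nonneg[OF assms(1)] K_D_le[OF assms] unfolding a_def N_def
    by (intro power_mono) auto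
  also have "\<dots> \<le> 2 * a\<^sup>2 + 2 * (\<delta>\<^sup>2 * N\<^sup>2)"
    using sum_squares_ge_zero[of "a - \<delta> * N" 0] by (simp add: power2_eq_square algebra_simps)
  finally have "(K_D D f \<delta>)\<^sup>2 \<le> 2 * a\<^sup>2 + 2 * (\<delta>\<^sup>2 * N\<^sup>2)" .
  moreover have "lam\<^sup>2 / (2 * \<delta>\<^sup>2) = 2 * (lam\<^sup>2 / (4 * \<delta>\<^sup>2))"
    using assms(1) by (simp add: field_simps)
  ultimately show ?thesis unfolding a_def N_def by simp
qed

lemma half_INF_K_D_le:
  assumes "lam \<ge> 0" "h \<in> L1 D"
  shows "(1/2) * (INF \<delta>\<in>{0<..}. (K_D D f \<delta>)\<^sup>2 + lam\<^sup>2 / (2 * \<delta>\<^sup>2))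
           \<le> (norm (f - h))\<^sup>2 + lam * L1_norm D h"
proof (rule field_le_epsilon)
  fix e :: real
  assume "e > 0"
  then obtain \<delta> where \<delta>: "\<delta> > 0"
    and approx: "\<delta>\<^sup>2 * (L1_norm D h)\<^sup>2 + lam\<^sup>2 / (4 * \<delta>\<^sup>2) \<le> lam * L1_norm D h + e"
    using amgm_quarter_approx L1_norm_nonneg[OF assms(2)] assms(1) by blast
  have "(INF \<delta>\<in>{0<..}. (K_D D f \<delta>)\<^sup>2 + lam\<^sup>2 / (2 * \<delta>\<^sup>2)) \<le> (K_D D f \<delta>)\<^sup>2 + lam\<^sup>2 / (2 * \<delta>\<^sup>2)"
    using \<delta> by (intro cINF_lower bdd_belowI[where m=0]) auto
  then show "(1/2) * (INF \<delta>\<in>{0<..}. (K_D D f \<delta>)\<^sup>2 + lam\<^sup>2 / (2 * \<delta>\<^sup>2))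
               \<le> (norm (f - h))\<^sup>2 + lam * L1_norm D h + e"
    using half_K_D_bound[OF \<delta> assms(2), of f lam] approx by simp
qed

lemma L_D_le_K_D:
  assumes "lam \<ge> 0" "\<delta> > 0"
  shows "L_D D f lam \<le> (K_D D f \<delta>)\<^sup>2 + lam\<^sup>2 / (4 * \<delta>\<^sup>2)"
proof -
  define c where "c = lam\<^sup>2 / (4 * \<delta>\<^sup>2)"
  text \<open>Squaring does not pass through the infimum defining \<open>K_D\<close>, so compare its terms with
    a square root instead; the \<open>max 0\<close> keeps that root meaningful.\<close>
  have "sqrt (max 0 (L_D D f lam - c)) \<le> norm (f - h) + \<delta> * L1_norm D h" if h: "h \<in> L1 D" for h
  proof -
    define a where "a = norm (f - h)"
    define N where "N = L1_norm D h"
    have N: "N \<ge> 0" unfolding N_def using h by (rule L1_norm_nonneg)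
    have "L_D D f lam - c \<le> a\<^sup>2 + \<delta>\<^sup>2 * N\<^sup>2"
      using L_D_le[OF assms(1) h, of f] mult_le_amgm_quarter[of \<delta> lam N] assms(2)
      unfolding a_def N_def c_def by simp
    also have "\<dots> \<le> (a + \<delta> * N)\<^sup>2"
      using N assms(2) by (simp add: a_def power2_eq_square algebra_simps)
    finally have "sqrt (max 0 (L_D D f lam - c)) \<le> sqrt ((a + \<delta> * N)\<^sup>2)"
      by (intro real_sqrt_le_mono) simp
    also have "\<dots> = a + \<delta> * N" using N assms(2) by (simp add: a_def)
    finally show ?thesis unfolding a_def N_def .
  qed
  then have "sqrt (max 0 (L_D D f lam - c)) \<le> K_D D f \<delta>"
    unfolding K_D_def using zero_in_L1[of D] by (intro cINF_greatest) auto
  then have "(sqrt (max 0 (L_D D f lam - c)))\<^sup>2 \<le> (K_D D f \<delta>)\<^sup>2"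
    by (intro power_mono) auto
  then show ?thesis unfolding c_def by simp
qed

theorem lemma5p1:
  fixes D :: "'a::{real_inner, complete_space} set" and f :: 'a and lam :: real
  assumes "lam \<ge> 0"
  shows "(1/2) * (INF \<delta>\<in>{0<..}. (K_D D f \<delta>)\<^sup>2 + lam\<^sup>2 / (2 * \<delta>\<^sup>2)) \<le> L_D D f lam \<and>
         L_D D f lam \<le> (INF \<delta>\<in>{0<..}. (K_D D f \<delta>)\<^sup>2 + lam\<^sup>2 / (4 * \<delta>\<^sup>2))"
proof
  show "(1/2) * (INF \<delta>\<in>{0<..}. (K_D D f \<delta>)\<^sup>2 + lam\<^sup>2 / (2 * \<delta>\<^sup>2)) \<le> L_D D f lam"
    unfolding L_D_def using zero_in_L1[of D] half_INF_K_D_le[OF assms]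
    by (intro cINF_greatest) auto
  show "L_D D f lam \<le> (INF \<delta>\<in>{0<..}. (K_D D f \<delta>)\<^sup>2 + lam\<^sup>2 / (4 * \<delta>\<^sup>2))"
    using L_D_le_K_D[OF assms] by (intro cINF_greatest) auto
qed

end
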